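(* Let $S(0)>0$, $\sigma>0$, $T>0$, $K>0$, and real numbers $r<\mu$. Let $S(T)=S(0)e^{\mu T-\frac12\sigma^2T+\sigma\sqrt T Z}$ with $Z\sim N(0,1)$ under $P$, and $C(T)=(S(T)-K)^+$. For $x\in[0,1)$ let $C_x=e^{-rT}\big(\mathbb{E}_P(C(T))-\tfrac12xS(0)(e^{\mu T}-e^{rT})\big)$ and $$d_1=\frac{1}{\sigma\sqrt T}\Big(\ln\frac{(xS(0)-C_x)e^{rT}}{S(0)x}-\mu T+\tfrac12\sigma^2T\Big),\quad d=\frac{1}{\sigma\sqrt T}\Big(\ln\frac{K}{S(0)}-\mu T+\tfrac12\sigma^2T\Big),$$ $$d_2=\frac{1}{\sigma\sqrt T}\Big(\ln\frac{K+(C_x-xS(0))e^{rT}}{S(0)(1-x)}-\mu T+\tfrac12\sigma^2T\Big),$$ with the convention $d_1=-\infty$ whenever $x=0$ or $xS(0)-C_x\le0$. Then $d_1<d<d_2$.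
   Context: The paper assumes $\mu>r$ throughout; $\mathbb{E}_P$ is expectation under the physical measure $P$. *)

theory Defs
  imports "HOL-Probability.Probability"
begin

definition d1_ext :: "real \<Rightarrow> real \<Rightarrow> real \<Rightarrow> real \<Rightarrow> real \<Rightarrow> real \<Rightarrow> real \<Rightarrow> ereal" where
  "d1_ext S0 sg T mu r x Cx =
     (if x = 0 \<or> x * S0 - Cx \<le> 0 then MInfty
      else ereal ((ln ((x * S0 - Cx) * exp (r * T) / (S0 * x)) - mu * T + sg^2 * T / 2)
                  / (sg * sqrt T)))"

end

theory Submission
  imports Defs
begin

text \<open>Write \<open>E\<close> for the undiscounted expected call payoff, \<open>m = e^(mu T)\<close> and \<open>A = e^(r T)\<close>.
  Then \<open>C_x A = E - x S(0) (m - A) / 2\<close>, and both \<open>d_1 < d\<close> and \<open>d < d_2\<close> reduce, after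
  clearing the logarithms, to the single inequality \<open>x (S(0) (m + A) / 2 - K) < E\<close>.
  It holds because \<open>E > 0\<close>, the payoff being positive with positive probability, and
  \<open>E \<ge> S(0) m - K = E(S(T)) - K\<close>, while the bracket is below \<open>S(0) m - K\<close> as \<open>A < m\<close>.\<close>

lemma std_normal_density_mult_exp:
  "std_normal_density z * exp (b * z) = exp (b\<^sup>2 / 2) * normal_density b 1 z"
proof -
  have "- z\<^sup>2 / 2 + b * z = b\<^sup>2 / 2 + - (z - b)\<^sup>2 / 2"
    by (simp add: power2_eq_square field_simps)
  then have "exp (- z\<^sup>2 / 2) * exp (b * z) = exp (b\<^sup>2 / 2) * exp (- (z - b)\<^sup>2 / 2)"
    by (simp only: exp_add[symmetric])
  then show ?thesis
    unfolding std_normal_density_def normal_density_def by simp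
qed

lemma integral_lborel_pos_if_pos_on_ray:
  fixes h :: "real \<Rightarrow> real"
  assumes "integrable lborel h" and "\<And>z. z0 < z \<Longrightarrow> 0 < h z" and "\<And>z. 0 \<le> h z"
  shows "0 < integral\<^sup>L lborel h"
proof (rule ccontr)
  assume "\<not> 0 < integral\<^sup>L lborel h"
  moreover have "0 \<le> integral\<^sup>L lborel h"
    by (rule integral_nonneg_AE) (simp add: assms(3))
  ultimately have "integral\<^sup>L lborel h = 0"
    by simp
  then have "AE z in lborel. h z = 0"
    using integral_nonneg_eq_0_iff_AE[OF assms(1)] assms(3) by simp
  then have "AE z in lborel. z \<notin> {z0<..}"
    by eventually_elim (use assms(2) in fastforce)
  then have "emeasure lborel {z0<..} = 0"
    by (subst (asm) AE_iff_measurable[of "{z0<..}"]) auto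
  moreover have "emeasure lborel {z0<..z0 + 1} \<le> emeasure lborel {z0<..}"
    by (rule emeasure_mono) auto
  ultimately show False by simp
qed

context prob_space
begin

lemma lognormal_integrable_expectation:
  assumes Z: "distributed M lborel Z std_normal_density"
  shows "integrable M (\<lambda>\<omega>. exp (a + b * Z \<omega>))"
    and "expectation (\<lambda>\<omega>. exp (a + b * Z \<omega>)) = exp (a + b\<^sup>2 / 2)"
proof -
  have density: "std_normal_density z * exp (a + b * z) = exp (a + b\<^sup>2 / 2) * normal_density b 1 z"
    for z using std_normal_density_mult_exp[of z b] by (simp add: exp_add algebra_simps)
  have meas: "(\<lambda>z. exp (a + b * z)) \<in> borel_measurable lborel" by measurable
  show "integrable M (\<lambda>\<omega>. exp (a + b * Z \<omega>))"
    using distributed_integrable[OF Z meas] by (simp add: density)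
  show "expectation (\<lambda>\<omega>. exp (a + b * Z \<omega>)) = exp (a + b\<^sup>2 / 2)"
    using distributed_integral[OF Z meas] by (simp add: density)
qed

lemma call_payoff_integrable:
  assumes "distributed M lborel Z std_normal_density"
  shows "integrable M (\<lambda>\<omega>. max (S0 * exp (a + b * Z \<omega>) - K) 0)"
  using lognormal_integrable_expectation(1)[OF assms] by auto

lemma expectation_call_payoff_ge_forward:
  assumes "distributed M lborel Z std_normal_density"
  shows "S0 * exp (a + b\<^sup>2 / 2) - K \<le> expectation (\<lambda>\<omega>. max (S0 * exp (a + b * Z \<omega>) - K) 0)"
proof -
  note lognormal = lognormal_integrable_expectation[OF assms, of a b]
  have "S0 * exp (a + b\<^sup>2 / 2) - K = expectation (\<lambda>\<omega>. S0 * exp (a + b * Z \<omega>) - K)"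
    using lognormal prob_space by (simp add: Bochner_Integration.integral_diff)
  also have "\<dots> \<le> expectation (\<lambda>\<omega>. max (S0 * exp (a + b * Z \<omega>) - K) 0)"
    by (rule integral_mono) (use lognormal(1) call_payoff_integrable[OF assms] in auto)
  finally show ?thesis .
qed

lemma expectation_call_payoff_pos:
  assumes Z: "distributed M lborel Z std_normal_density"
    and "0 < S0" and "0 < K" and "0 < b"
  shows "0 < expectation (\<lambda>\<omega>. max (S0 * exp (a + b * Z \<omega>) - K) 0)"
proof -
  define h where "h = (\<lambda>z. std_normal_density z * max (S0 * exp (a + b * z) - K) 0)"
  have meas: "(\<lambda>z. max (S0 * exp (a + b * z) - K) 0) \<in> borel_measurable lborel" by measurable
  have "integrable lborel h"
    using distributed_integrable[OF Z meas] call_payoff_integrable[OF Z] by (simp add: h_def)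
  moreover have "0 < h z" if "(ln (K / S0) - a) / b < z" for z
  proof -
    have "ln (K / S0) < a + b * z"
      using that \<open>0 < b\<close> by (simp add: field_simps)
    then have "K / S0 < exp (a + b * z)"
      using \<open>0 < S0\<close> \<open>0 < K\<close> by (metis exp_less_cancel_iff exp_ln divide_pos_pos)
    then have "K < S0 * exp (a + b * z)"
      using \<open>0 < S0\<close> by (simp add: field_simps)
    then show ?thesis by (simp add: h_def normal_density_pos)
  qed
  ultimately have "0 < integral\<^sup>L lborel h"
    by (rule integral_lborel_pos_if_pos_on_ray) (simp_all add: h_def)
  then show ?thesis
    using distributed_integral[OF Z meas] by (simp add: h_def)
qed

end

lemma weighted_call_bound:
  fixes E S0 m A K x :: real
  assumes "0 < E" and "S0 * m - K \<le> E" and "A < m" and "0 < S0" and "0 \<le> x" and "x < 1"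
  shows "x * (S0 * (m + A) / 2 - K) < E"
proof -
  define c where "c = S0 * (m + A) / 2 - K"
  have "c < S0 * m - K"
    using assms unfolding c_def by (simp add: field_simps)
  moreover have "x * c \<le> max c 0"
    using \<open>0 \<le> x\<close> \<open>x < 1\<close> by (cases "0 < c") (auto simp: mult_nonneg_nonpos mult_left_le_one_le)
  ultimately show ?thesis
    using assms unfolding c_def by linarith
qed

lemma strike_ratio_bounds:
  fixes E Cx S0 m A K x :: real
  assumes "0 < E" and "S0 * m - K \<le> E" and "A < m" and "0 < S0" and "0 \<le> x" and "x < 1"
    and Cx: "Cx * A = E - x * S0 * (m - A) / 2"
  shows "0 < x \<Longrightarrow> (x * S0 - Cx) * A / (S0 * x) < K / S0"
    and "K / S0 < (K + (Cx - x * S0) * A) / (S0 * (1 - x))"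
proof -
  have key: "x * (S0 * (m + A) / 2 - K) < E"
    using weighted_call_bound assms by blast
  have d1: "(x * S0 - Cx) * A < x * K" and d2: "K * (1 - x) < K + (Cx - x * S0) * A"
    using key Cx by (simp_all add: algebra_simps) argo+
  show "(x * S0 - Cx) * A / (S0 * x) < K / S0" if "0 < x"
  proof -
    have "(x * S0 - Cx) * A / (S0 * x) < x * K / (S0 * x)"
      using d1 that \<open>0 < S0\<close> by (intro divide_strict_right_mono) auto
    then show ?thesis using that by simp
  qed
  have "K * (1 - x) / (S0 * (1 - x)) < (K + (Cx - x * S0) * A) / (S0 * (1 - x))"
    using d2 \<open>0 < S0\<close> \<open>x < 1\<close> by (intro divide_strict_right_mono) auto
  then show "K / S0 < (K + (Cx - x * S0) * A) / (S0 * (1 - x))"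
    using \<open>x < 1\<close> by simp
qed

theorem mainTheorem3:
  fixes M :: "'a measure" and Z :: "'a \<Rightarrow> real"
    and S0 sg T K mu r x :: real
  assumes "prob_space M"
    and "distributed M lborel Z std_normal_density"
    and "S0 > 0" and "sg > 0" and "T > 0" and "K > 0" and "r < mu"
    and "0 \<le> x" and "x < 1"
  defines "ST \<equiv> (\<lambda>\<omega>. S0 * exp (mu * T - sg^2 * T / 2 + sg * sqrt T * Z \<omega>))"
  defines "Cx \<equiv> exp (- r * T) * (prob_space.expectation M (\<lambda>\<omega>. max (ST \<omega> - K) 0)
                   - x * S0 * (exp (mu * T) - exp (r * T)) / 2)"
  defines "d \<equiv> (ln (K / S0) - mu * T + sg^2 * T / 2) / (sg * sqrt T)"
  defines "d2 \<equiv> (ln ((K + (Cx - x * S0) * exp (r * T)) / (S0 * (1 - x))) - mu * T + sg^2 * T / 2)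
                 / (sg * sqrt T)"
  shows "d1_ext S0 sg T mu r x Cx < ereal d \<and> d < d2"
proof -
  interpret P: prob_space M by fact
  define E where "E = P.expectation (\<lambda>\<omega>. max (ST \<omega> - K) 0)"
  have "(sg * sqrt T)\<^sup>2 / 2 = sg\<^sup>2 * T / 2"
    using \<open>T > 0\<close> by (simp add: power_mult_distrib)
  then have "S0 * exp (mu * T) - K \<le> E"
    using P.expectation_call_payoff_ge_forward[OF assms(2), of S0 "mu * T - sg\<^sup>2 * T / 2" "sg * sqrt T" K]
    unfolding E_def ST_def by simp
  moreover have "0 < E"
    using P.expectation_call_payoff_pos[OF assms(2)] assms unfolding E_def ST_def by simp
  moreover have "Cx * exp (r * T) = E - x * S0 * (exp (mu * T) - exp (r * T)) / 2"
    unfolding Cx_def E_def by (simp add: exp_minus field_simps)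
  ultimately have ratio_d1: "0 < x \<Longrightarrow> (x * S0 - Cx) * exp (r * T) / (S0 * x) < K / S0"
    and ratio_d2: "K / S0 < (K + (Cx - x * S0) * exp (r * T)) / (S0 * (1 - x))"
    using strike_ratio_bounds[of E S0 "exp (mu * T)" K "exp (r * T)" x Cx] assms by simp_all
  have score_mono: "(ln u - mu * T + sg\<^sup>2 * T / 2) / (sg * sqrt T)
      < (ln v - mu * T + sg\<^sup>2 * T / 2) / (sg * sqrt T)" if "0 < u" "u < v" for u v
    using that assms by (intro divide_strict_right_mono) auto
  have "d1_ext S0 sg T mu r x Cx < ereal d"
    using ratio_d1 assms unfolding d1_ext_def d_def by (auto intro: score_mono)
  moreover have "d < d2"
    using ratio_d2 assms unfolding d_def d2_def by (auto intro: score_mono)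
  ultimately show ?thesis ..
qed

end
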